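(* Let $\mathcal{X}$ be the class of finite groups $G$ in which independence and strong independence coincide, i.e. in which a finite subset $A\subseteq G$ is independent if and only if it is strongly independent. Then $\mathcal{X}$ is closed under taking subgroups, and every group in $\mathcal{X}$ is an EPPO group.
   Context: A subset $A$ of a group $G$ is \emph{independent} if $a\notin\langle A\setminus\{a\}\rangle$ for every $a\in A$. A finite subset $A$ is \emph{strongly independent} if no subgroup of $G$ containing $A$ can be generated by fewer than $|A|$ elements. An \emph{EPPO group} is a group in which every element has prime power order. *)

theory Defs
  imports "HOL-Algebra.Algebra" "HOL-Computational_Algebra.Primes"
begin

definition independent :: "('a, 'b) monoid_scheme \<Rightarrow> 'a set \<Rightarrow> bool" where
  "independent G A \<longleftrightarrow> A \<subseteq> carrier G \<and> (\<forall>a\<in>A. a \<notin> generate G (A - {a}))"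

definition strongly_independent :: "('a, 'b) monoid_scheme \<Rightarrow> 'a set \<Rightarrow> bool" where
  "strongly_independent G A \<longleftrightarrow> A \<subseteq> carrier G \<and> finite A \<and>
     (\<forall>K. subgroup K G \<and> A \<subseteq> K \<longrightarrow>
        \<not> (\<exists>B. B \<subseteq> K \<and> finite B \<and> card B < card A \<and> generate G B = K))"

definition EPPO :: "('a, 'b) monoid_scheme \<Rightarrow> bool" where
  "EPPO G \<longleftrightarrow> (\<forall>g\<in>carrier G. \<exists>p k. Factorial_Ring.prime (p::nat) \<and> group.ord G g = p ^ k)"

definition class_X :: "('a, 'b) monoid_scheme \<Rightarrow> bool" where
  "class_X G \<longleftrightarrow> group G \<and> finite (carrier G) \<and>
     (\<forall>A. A \<subseteq> carrier G \<and> finite A \<longrightarrow> (independent G A \<longleftrightarrow> strongly_independent G A))"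

end

theory Submission
  imports Defs
begin

text \<open>Strong independence always implies independence, since an element lying in the subgroup
  generated by the others makes that subgroup generated by fewer elements. Independence of a subset
  of a subgroup H is the same in H as in G, because generated subgroups are computed alike in both,
  and strong independence passes from G down to H, because subgroups of H are subgroups of G;
  hence the class is subgroup-closed. If some element g had an order that is not a prime power,
  write its order as q m with coprime q, m > 1: then g^q and g^m are independent, yet both lie in
  the cyclic group generated by g alone, so they are not strongly independent.\<close>

lemma nat_coprime_factorization_if_not_prime_power:
  fixes n :: nat
  assumes "n \<ge> 1" and not_pp: "\<not> (\<exists>p k. Factorial_Ring.prime p \<and> n = p ^ k)"
  obtains q m where "n = q * m" "coprime q m" "q > 1" "m > 1"
proof -
  have "n \<noteq> 1"
    using not_pp two_is_prime_nat power_0 by metis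
  then obtain p where p: "Factorial_Ring.prime p" "p dvd n"
    using prime_factor_nat by blast
  define q where "q = p ^ multiplicity p n"
  define m where "m = n div q"
  have n_eq: "n = q * m"
    unfolding m_def q_def using multiplicity_dvd[of p n] by simp
  have "\<not> p dvd m"
    unfolding m_def q_def
    by (rule multiplicity_decompose) (use assms(1) p(1) not_prime_unit in auto)
  then have "coprime q m"
    using p(1) by (simp add: q_def prime_imp_coprime)
  moreover have "multiplicity p n > 0"
    using p assms(1) prime_multiplicity_gt_zero_iff[OF prime_imp_prime_elem[OF p(1)], of n] by simp
  then have "q > 1"
    unfolding q_def using one_less_power[OF prime_gt_1_nat[OF p(1)]] by blast
  moreover have "m \<noteq> 0"
    using n_eq assms(1) by auto
  moreover have "m \<noteq> 1"
    using n_eq not_pp p(1) q_def by auto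
  ultimately show thesis
    using that n_eq by simp
qed

lemma (in group) dvd_of_pow_in_generate_pow:
  assumes g: "g \<in> carrier G" and "b dvd ord g"
    and "g [^] (a::nat) \<in> generate G {g [^] (b::nat)}"
  shows "b dvd a"
proof -
  obtain i :: int where "g [^] a = (g [^] b) [^] i"
    using assms(3) generate_pow[of "g [^] b"] g by auto
  also have "\<dots> = g [^] (int b * i)"
    using g by (metis int_pow_int int_pow_pow)
  finally have "g [^] int a = g [^] (int b * i)"
    by (simp add: int_pow_int)
  then have "int (ord g) dvd int b * i - int a"
    using int_pow_eq g by blast
  then have "int b dvd int b * i - int a"
    using assms(2) by (meson dvd_trans int_dvd_int_iff)
  then show ?thesis
    by (metis dvd_diff_right_iff dvd_triv_left int_dvd_int_iff)
qed

lemma strongly_independentD: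
  assumes "strongly_independent G A"
  shows "A \<subseteq> carrier G" "finite A"
    and "\<lbrakk>subgroup K G; A \<subseteq> K; B \<subseteq> K; finite B; generate G B = K\<rbrakk> \<Longrightarrow> card A \<le> card B"
proof -
  show "A \<subseteq> carrier G" "finite A"
    using assms by (simp_all add: strongly_independent_def)
  assume "subgroup K G" "A \<subseteq> K" "B \<subseteq> K" "finite B" "generate G B = K"
  moreover have "\<forall>K. subgroup K G \<and> A \<subseteq> K \<longrightarrow>
      \<not> (\<exists>B. B \<subseteq> K \<and> finite B \<and> card B < card A \<and> generate G B = K)"
    using assms by (simp add: strongly_independent_def)
  ultimately show "card A \<le> card B"
    using not_le by blast
qed

lemma strongly_independent_card_le:
  assumes "group G" "strongly_independent G A"
    and "B \<subseteq> carrier G" "finite B" "A \<subseteq> generate G B"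
  shows "card A \<le> card B"
proof (rule strongly_independentD(3)[OF assms(2) _ assms(5) _ assms(4) refl])
  show "subgroup (generate G B) G"
    using group.generate_is_subgroup[OF assms(1,3)] .
  show "B \<subseteq> generate G B"
    by (rule subsetI) (rule generate.incl)
qed

lemma strongly_independent_imp_independent:
  assumes "group G" "strongly_independent G A"
  shows "independent G A"
  unfolding independent_def
proof (intro conjI ballI notI)
  show "A \<subseteq> carrier G"
    using strongly_independentD(1)[OF assms(2)] .
  note A_finite = strongly_independentD(2)[OF assms(2)]
  fix a assume "a \<in> A" and "a \<in> generate G (A - {a})"
  then have "A \<subseteq> generate G (A - {a})"
    using generate.incl[of _ "A - {a}" G] by blast
  then have "card A \<le> card (A - {a})"
    using strongly_independent_card_le[OF assms] \<open>A \<subseteq> carrier G\<close> A_finite by blast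
  then show False
    using card_Diff1_less[OF A_finite \<open>a \<in> A\<close>] by simp
qed

lemma (in group) independent_subgroup_iff:
  assumes "subgroup H G" "A \<subseteq> H"
  shows "independent (G\<lparr>carrier := H\<rparr>) A \<longleftrightarrow> independent G A"
proof -
  have "generate (G\<lparr>carrier := H\<rparr>) (A - {a}) = generate G (A - {a})" for a
    using generate_consistent[OF _ assms(1)] assms(2) by blast
  moreover have "A \<subseteq> carrier G"
    using assms subgroup.subset by blast
  ultimately show ?thesis
    using assms(2) unfolding independent_def by simp
qed

lemma (in group) strongly_independent_subgroupI:
  assumes H: "subgroup H G" and "A \<subseteq> H" and A: "strongly_independent G A"
  shows "strongly_independent (G\<lparr>carrier := H\<rparr>) A"
  unfolding strongly_independent_def
proof (intro conjI allI impI notI)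
  show "A \<subseteq> carrier (G\<lparr>carrier := H\<rparr>)" "finite A"
    using assms(2) strongly_independentD(2)[OF A] by simp_all
  fix K assume K: "subgroup K (G\<lparr>carrier := H\<rparr>) \<and> A \<subseteq> K"
  then have "K \<subseteq> H"
    using subgroup.subset by force
  have "group (G\<lparr>carrier := K\<rparr>)"
    using subgroup.subgroup_is_group[OF conjunct1[OF K] subgroup.subgroup_is_group[OF H is_group]]
    by simp
  then have "subgroup K G"
    using group_incl_imp_subgroup \<open>K \<subseteq> H\<close> subgroup.subset[OF H] by blast
  assume "\<exists>B. B \<subseteq> K \<and> finite B \<and> card B < card A \<and> generate (G\<lparr>carrier := H\<rparr>) B = K"
  then obtain B where B: "B \<subseteq> K" "finite B" "card B < card A"
    and "generate (G\<lparr>carrier := H\<rparr>) B = K"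
    by blast
  then have "generate G B = K"
    using generate_consistent[OF _ H] \<open>K \<subseteq> H\<close> by blast
  then have "card A \<le> card B"
    using strongly_independentD(3)[OF A \<open>subgroup K G\<close>] K B(1,2) by blast
  then show False
    using B(3) by simp
qed

lemma class_XD:
  assumes "class_X G"
  shows "group G" "finite (carrier G)"
    and "\<lbrakk>A \<subseteq> carrier G; finite A\<rbrakk> \<Longrightarrow> independent G A \<longleftrightarrow> strongly_independent G A"
  using assms by (simp_all add: class_X_def)

lemma class_X_subgroup:
  assumes "class_X G" and H: "subgroup H G"
  shows "class_X (G\<lparr>carrier := H\<rparr>)"
proof -
  interpret group G
    using class_XD(1)[OF assms(1)] .
  have "group (G\<lparr>carrier := H\<rparr>)"
    using subgroup.subgroup_is_group[OF H is_group] .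
  moreover have "H \<subseteq> carrier G"
    using subgroup.subset[OF H] .
  then have "finite H"
    using class_XD(2)[OF assms(1)] finite_subset by blast
  moreover have "independent (G\<lparr>carrier := H\<rparr>) A \<longleftrightarrow> strongly_independent (G\<lparr>carrier := H\<rparr>) A"
    if "A \<subseteq> H" "finite A" for A
  proof
    assume "independent (G\<lparr>carrier := H\<rparr>) A"
    then have "strongly_independent G A"
      using independent_subgroup_iff[OF H that(1)] class_XD(3)[OF assms(1)] that
        \<open>H \<subseteq> carrier G\<close> by blast
    then show "strongly_independent (G\<lparr>carrier := H\<rparr>) A"
      using strongly_independent_subgroupI[OF H that(1)] by blast
  next
    show "strongly_independent (G\<lparr>carrier := H\<rparr>) A \<Longrightarrow> independent (G\<lparr>carrier := H\<rparr>) A"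
      using strongly_independent_imp_independent[OF \<open>group (G\<lparr>carrier := H\<rparr>)\<close>] .
  qed
  ultimately show ?thesis
    unfolding class_X_def by simp
qed

lemma (in group) independent_coprime_powers:
  assumes g: "g \<in> carrier G" and "ord g = q * m" "coprime q m" "q > 1" "m > 1"
  shows "g [^] q \<noteq> g [^] m" and "independent G {g [^] q, g [^] m}"
proof -
  have q_not_in: "g [^] q \<notin> generate G {g [^] m}"
  proof
    assume "g [^] q \<in> generate G {g [^] m}"
    then have "m dvd q"
      using dvd_of_pow_in_generate_pow[OF g] assms(2) by simp
    then show False
      using assms(3,5) coprime_common_divisor_nat by fastforce
  qed
  have m_not_in: "g [^] m \<notin> generate G {g [^] q}"
  proof
    assume "g [^] m \<in> generate G {g [^] q}"
    then have "q dvd m"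
      using dvd_of_pow_in_generate_pow[OF g] assms(2) by simp
    then show False
      using assms(3,4) coprime_common_divisor_nat by fastforce
  qed
  moreover have "g [^] q \<in> generate G {g [^] q}"
    by (rule generate.incl) simp
  ultimately show "g [^] q \<noteq> g [^] m"
    by auto
  then show "independent G {g [^] q, g [^] m}"
    unfolding independent_def using g q_not_in m_not_in by (auto simp: insert_Diff_if)
qed

lemma (in group) nat_pow_in_generate_singleton:
  assumes "g \<in> carrier G"
  shows "g [^] (n::nat) \<in> generate G {g}"
proof -
  have "g [^] n = g [^] int n"
    by (simp add: int_pow_int)
  then show ?thesis
    using generate_pow[OF assms] by blast
qed

lemma (in group) class_X_imp_EPPO:
  assumes "class_X G"
  shows "EPPO G"
  unfolding EPPO_def
proof (rule ballI, rule ccontr)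
  fix g assume g: "g \<in> carrier G" and not_pp: "\<nexists>p k. Factorial_Ring.prime p \<and> ord g = p ^ k"
  have "ord g \<ge> 1"
    using ord_ge_1[OF class_XD(2)[OF assms] g] .
  then obtain q m where qm: "ord g = q * m" "coprime q m" "q > 1" "m > 1"
    by (rule nat_coprime_factorization_if_not_prime_power[OF _ not_pp])
  let ?A = "{g [^] q, g [^] m}"
  have "strongly_independent G ?A"
    using independent_coprime_powers(2)[OF g qm] class_XD(3)[OF assms] g by simp
  moreover have "?A \<subseteq> generate G {g}"
    using nat_pow_in_generate_singleton[OF g] by simp
  ultimately have "card ?A \<le> card {g}"
    using strongly_independent_card_le[OF is_group, of ?A "{g}"] g by simp
  with independent_coprime_powers(1)[OF g qm] show False
    by simp
qed

theorem mainTheorem3: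
  fixes G :: "('a, 'b) monoid_scheme"
  assumes "class_X G"
  shows "(\<forall>H. subgroup H G \<longrightarrow> class_X (G\<lparr>carrier := H\<rparr>)) \<and> EPPO G"
  using class_X_subgroup[OF assms] group.class_X_imp_EPPO[OF class_XD(1)[OF assms] assms] by blast

end
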